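(* Let $t,t':V\to\mathbb{R}_{\ge0}$ be fingerprints with $t_v\le t'_v$ for all $v\in V$. Then at every time $\tau\ge0$: (i) every active component in shadow moat growing on $(G,t)$ is contained in some active component of shadow moat growing on $(G,t')$ at the same time $\tau$; and (ii) every component (active or not) of the run on $(G,t)$ at time $\tau$ is contained in some component of the run on $(G,t')$ at time $\tau$.
   Context: $G=(V,E,c)$ is an undirected graph with edge costs $c:E\to\mathbb{R}_{\ge0}$; $\delta(S)$ denotes the edges with exactly one endpoint in $S$. Shadow moat growing on $(G,t)$, for a fingerprint $t:V\to\mathbb{R}_{\ge0}$: a continuous process in time $\tau\ge0$ maintaining a forest $F$ (initially empty), the components of $(V,F)$, and values $y_S\ge0$ ($S\subseteq V$, initially $0$). At time $\tau$ a component $C$ is active iff it contains $w$ with $t_w>\tau$; each active component $C$ increases $y_C$ at rate $1$. When an edge $e$ between different components satisfies $\sum_{S:e\in\delta(S)}y_S=c_e$ it is added to $F$ and the components merge (ties processed one at a time by a fixed rule). The process stops when no component is active; the components and active components "at time $\tau$" are those after all merges and deactivations occurring at time $\tau$. *)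

theory Defs
  imports "HOL-Analysis.Analysis"
begin

text \<open>A run of shadow moat growing is described by the family P of its components:
P tau is the set of components (after all merges at time tau).\<close>

definition wf_graph :: "'v set \<Rightarrow> 'v set set \<Rightarrow> ('v set \<Rightarrow> real) \<Rightarrow> bool" where
  "wf_graph V E c \<longleftrightarrow> finite V \<and> (\<forall>e\<in>E. e \<subseteq> V \<and> card e = 2 \<and> c e \<ge> 0)"

definition cuts :: "'v set \<Rightarrow> 'v set \<Rightarrow> bool" where
  "cuts S e \<longleftrightarrow> card (e \<inter> S) = 1"

definition active_at :: "('v \<Rightarrow> real) \<Rightarrow> real \<Rightarrow> 'v set \<Rightarrow> bool" where
  "active_at t \<tau> C \<longleftrightarrow> (\<exists>w\<in>C. t w > \<tau>)"

definition yval :: "(real \<Rightarrow> 'v set set) \<Rightarrow> ('v \<Rightarrow> real) \<Rightarrow> 'v set \<Rightarrow> real \<Rightarrow> real" where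
  "yval P t S \<tau> = integral {0..\<tau>} (\<lambda>s. if S \<in> P s \<and> active_at t s S then 1 else 0)"

definition load :: "'v set \<Rightarrow> (real \<Rightarrow> 'v set set) \<Rightarrow> ('v \<Rightarrow> real) \<Rightarrow> 'v set \<Rightarrow> real \<Rightarrow> real" where
  "load V P t e \<tau> = (\<Sum>S | S \<subseteq> V \<and> cuts S e. yval P t S \<tau>)"

definition components :: "'v set \<Rightarrow> 'v set set \<Rightarrow> 'v set set" where
  "components V F = {{w \<in> V. (v, w) \<in> {(a, b). {a, b} \<in> F}\<^sup>*} | v. v \<in> V}"

text \<open>P is the (component trajectory of the) run of shadow moat growing on (G,t):
at every time tau >= 0 the components are exactly the connected components of the graph of
tight edges (the forest F consists of tight edges, and every tight edge lies inside a
component); components only coarsen over time.\<close>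
definition shadow_run ::
  "'v set \<Rightarrow> 'v set set \<Rightarrow> ('v set \<Rightarrow> real) \<Rightarrow> ('v \<Rightarrow> real) \<Rightarrow> (real \<Rightarrow> 'v set set) \<Rightarrow> bool" where
  "shadow_run V E c t P \<longleftrightarrow>
     (\<forall>\<tau>\<ge>0. P \<tau> = components V {e \<in> E. load V P t e \<tau> \<ge> c e}) \<and>
     (\<forall>s \<tau>. 0 \<le> s \<and> s \<le> \<tau> \<longrightarrow> (\<forall>C\<in>P s. \<exists>D\<in>P \<tau>. C \<subseteq> D))"

end

theory Submission
  imports Defs
begin

text \<open>The proof is a real induction on time. Suppose the run for \<open>t\<close> refines the run for \<open>t'\<close> at
all times before \<open>\<tau>\<close>, and let \<open>{a, b}\<close> be tight at \<open>\<tau>\<close> in the run for \<open>t\<close>. If \<open>a\<close> and \<open>b\<close>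
were in different components of the run for \<open>t'\<close> at \<open>\<tau>\<close>, they would be separated there during
all of \<open>[0, \<tau>]\<close>. Sending every active moat of the run for \<open>t\<close> that separates \<open>a\<close> from \<open>b\<close> to
the component of the run for \<open>t'\<close> containing it is then injective, and lands in active moats
separating \<open>a\<close> from \<open>b\<close> because \<open>t \<le> t'\<close>. So the load of \<open>{a, b}\<close> grows at least as fast in
the run for \<open>t'\<close>, and the edge is tight there as well. The induction passes each time because
loads are nondecreasing and Lipschitz, so components stay constant for a while to the right.\<close>

section \<open>Connected components\<close>

abbreviation edge_rel :: "'v set set \<Rightarrow> ('v \<times> 'v) set" where
  "edge_rel F \<equiv> {(a, b). {a, b} \<in> F}"

lemma sym_edge_rel: "sym (edge_rel F)"
  by (auto simp: sym_def insert_commute)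

lemma edge_rel_rtrancl_sym: "(a, b) \<in> (edge_rel F)\<^sup>* \<Longrightarrow> (b, a) \<in> (edge_rel F)\<^sup>*"
  using sym_rtrancl[OF sym_edge_rel] by (rule symD)

lemma components_subset: "C \<in> components V F \<Longrightarrow> C \<subseteq> V"
  unfolding components_def by auto

lemma components_connected:
  assumes "C \<in> components V F" "a \<in> C" "b \<in> C"
  shows "(a, b) \<in> (edge_rel F)\<^sup>*"
proof -
  obtain v where "C = {w \<in> V. (v, w) \<in> (edge_rel F)\<^sup>*}"
    using assms(1) unfolding components_def by auto
  then have "(v, a) \<in> (edge_rel F)\<^sup>*" "(v, b) \<in> (edge_rel F)\<^sup>*"
    using assms(2,3) by auto
  then show ?thesis by (rule rtrancl_trans[OF edge_rel_rtrancl_sym])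
qed

lemma components_eqI:
  assumes "C \<in> components V F" "D \<in> components V F" "x \<in> C" "x \<in> D"
  shows "C = D"
proof -
  obtain u v where u: "C = {w \<in> V. (u, w) \<in> (edge_rel F)\<^sup>*}"
    and v: "D = {w \<in> V. (v, w) \<in> (edge_rel F)\<^sup>*}"
    using assms(1,2) unfolding components_def by auto
  have ux: "(u, x) \<in> (edge_rel F)\<^sup>*" and vx: "(v, x) \<in> (edge_rel F)\<^sup>*"
    using assms(3,4) unfolding u v by auto
  have "(u, v) \<in> (edge_rel F)\<^sup>*" by (rule rtrancl_trans[OF ux edge_rel_rtrancl_sym[OF vx]])
  moreover have "(v, u) \<in> (edge_rel F)\<^sup>*" by (rule rtrancl_trans[OF vx edge_rel_rtrancl_sym[OF ux]])
  ultimately show ?thesis unfolding u v by (blast intro: rtrancl_trans)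
qed

lemma pairwise_disjnt_components: "pairwise disjnt (components V F)"
proof (rule pairwiseI)
  fix C D assume C: "C \<in> components V F" and D: "D \<in> components V F" and "C \<noteq> D"
  then show "disjnt C D" using components_eqI[OF C D] unfolding disjnt_def by blast
qed

lemma components_subset_eq:
  assumes "C \<in> components V F" "D \<in> components V F" "C \<subseteq> D"
  shows "C = D"
proof -
  obtain x where "x \<in> C" using assms(1) unfolding components_def by auto
  then show ?thesis using components_eqI[OF assms(1,2)] assms(3) by blast
qed

lemma components_refine:
  assumes "\<And>a b. {a, b} \<in> F \<Longrightarrow> (a, b) \<in> (edge_rel F')\<^sup>*" and "C \<in> components V F"
  shows "\<exists>D\<in>components V F'. C \<subseteq> D"
proof -
  obtain v where v: "v \<in> V" "C = {w \<in> V. (v, w) \<in> (edge_rel F)\<^sup>*}"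
    using assms(2) unfolding components_def by auto
  have "edge_rel F \<subseteq> (edge_rel F')\<^sup>*" using assms(1) by auto
  then have "(edge_rel F)\<^sup>* \<subseteq> (edge_rel F')\<^sup>*" by (rule rtrancl_subset_rtrancl)
  then have "C \<subseteq> {w \<in> V. (v, w) \<in> (edge_rel F')\<^sup>*}" using v by auto
  moreover have "{w \<in> V. (v, w) \<in> (edge_rel F')\<^sup>*} \<in> components V F'"
    using v(1) unfolding components_def by auto
  ultimately show ?thesis by blast
qed

lemma active_at_mono:
  assumes "active_at t s C" "C \<subseteq> D" "C \<subseteq> V" "\<forall>v\<in>V. t v \<le> t' v"
  shows "active_at t' s D"
  using assms unfolding active_at_def by (meson less_le_trans subsetD)

lemma active_refines:
  assumes "\<forall>v\<in>V. t v \<le> t' v" and "\<forall>C\<in>\<C>. C \<subseteq> V" and "\<forall>C\<in>\<C>. \<exists>D\<in>\<D>. C \<subseteq> D"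
  shows "\<forall>C\<in>\<C>. active_at t s C \<longrightarrow> (\<exists>D\<in>\<D>. active_at t' s D \<and> C \<subseteq> D)"
proof (intro ballI impI)
  fix C assume "C \<in> \<C>" "active_at t s C"
  then obtain D where "D \<in> \<D>" "C \<subseteq> D" using assms(3) by blast
  moreover have "active_at t' s D"
    using active_at_mono[OF \<open>active_at t s C\<close> \<open>C \<subseteq> D\<close> _ assms(1)] assms(2) \<open>C \<in> \<C>\<close> by blast
  ultimately show "\<exists>D\<in>\<D>. active_at t' s D \<and> C \<subseteq> D" by blast
qed

section \<open>Runs of shadow moat growing\<close>

lemma shadow_run_components:
  assumes "shadow_run V E c t P" "0 \<le> s"
  shows "P s = components V {e \<in> E. c e \<le> load V P t e s}"
  using assms unfolding shadow_run_def by blast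

lemma shadow_run_coarsens:
  assumes "shadow_run V E c t P" "0 \<le> s" "s \<le> u" "C \<in> P s"
  shows "\<exists>D\<in>P u. C \<subseteq> D"
  using assms unfolding shadow_run_def by blast

lemma shadow_run_subset:
  assumes "shadow_run V E c t P" "0 \<le> s" "C \<in> P s"
  shows "C \<subseteq> V"
  using assms(3) unfolding shadow_run_components[OF assms(1,2)] by (rule components_subset)

lemma shadow_run_connected:
  assumes run: "shadow_run V E c t P" and "0 \<le> s" "s \<le> \<tau>" "D \<in> P s" "a \<in> D" "b \<in> D"
  shows "(a, b) \<in> (edge_rel {e \<in> E. c e \<le> load V P t e \<tau>})\<^sup>*"
proof -
  obtain D' where D': "D' \<in> P \<tau>" "D \<subseteq> D'" using shadow_run_coarsens[OF run assms(2-4)] by blast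
  have "D' \<in> components V {e \<in> E. c e \<le> load V P t e \<tau>}"
    using D'(1) unfolding shadow_run_components[OF run order_trans[OF assms(2,3)]] .
  then show ?thesis by (rule components_connected) (use D'(2) assms(5,6) in blast)+
qed

lemma is_interval_active_times:
  assumes run: "shadow_run V E c t P"
  shows "is_interval {s. 0 \<le> s \<and> S \<in> P s \<and> active_at t s S}"
  unfolding is_interval_1
proof (intro ballI allI impI, elim conjE)
  fix x z y
  assume "x \<in> {s. 0 \<le> s \<and> S \<in> P s \<and> active_at t s S}"
    and "z \<in> {s. 0 \<le> s \<and> S \<in> P s \<and> active_at t s S}" and xy: "x \<le> y" and yz: "y \<le> z"
  then have x0: "0 \<le> x" and Sx: "S \<in> P x" and Sz: "S \<in> P z" and act: "active_at t z S"
    by auto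
  obtain D where D: "D \<in> P y" "S \<subseteq> D" using shadow_run_coarsens[OF run x0 xy Sx] by blast
  obtain D' where D': "D' \<in> P z" "D \<subseteq> D'"
    using shadow_run_coarsens[OF run order_trans[OF x0 xy] yz D(1)] by blast
  have "S = D'"
    using Sz D'(1) unfolding shadow_run_components[OF run order_trans[OF order_trans[OF x0 xy] yz]]
    by (rule components_subset_eq) (use D(2) D'(2) in blast)
  then have "D = S" using D(2) D'(2) by blast
  moreover have "active_at t y S" using act yz unfolding active_at_def by force
  ultimately show "y \<in> {s. 0 \<le> s \<and> S \<in> P s \<and> active_at t s S}"
    using x0 xy D(1) by auto
qed

lemma active_indicator_integrable:
  assumes run: "shadow_run V E c t P" and "0 \<le> a"
  shows "(\<lambda>s. if S \<in> P s \<and> active_at t s S then 1 else 0 :: real) integrable_on {a..b}"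
proof -
  let ?A = "{s. 0 \<le> s \<and> S \<in> P s \<and> active_at t s S}"
  have "is_interval (?A \<inter> {a..b})"
    by (rule is_interval_Int[OF is_interval_active_times[OF run] is_interval_cc])
  then have "?A \<inter> {a..b} \<in> lmeasurable"
    by (intro measurable_convex) (auto simp: is_interval_convex_1 intro: bounded_subset[of "{a..b}"])
  then have "indicat_real ?A integrable_on {a..b}" by (simp add: integrable_on_indicator)
  then show ?thesis by (rule integrable_eq) (use \<open>0 \<le> a\<close> in \<open>auto simp: indicator_def\<close>)
qed

lemma yval_increment_bounds:
  assumes run: "shadow_run V E c t P" and "0 \<le> \<sigma>" "\<sigma> \<le> y"
  shows "yval P t S \<sigma> \<le> yval P t S y" and "yval P t S y \<le> yval P t S \<sigma> + (y - \<sigma>)"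
proof -
  let ?f = "\<lambda>s. if S \<in> P s \<and> active_at t s S then 1 else 0 :: real"
  have int: "?f integrable_on {\<sigma>..y}" using active_indicator_integrable[OF run assms(2)] .
  have "yval P t S y = yval P t S \<sigma> + integral {\<sigma>..y} ?f"
    unfolding yval_def
    by (rule Henstock_Kurzweil_Integration.integral_combine[symmetric, OF assms(2,3)
          active_indicator_integrable[OF run]]) simp
  moreover have "0 \<le> integral {\<sigma>..y} ?f" by (rule integral_nonneg[OF int]) simp
  moreover have "integral {\<sigma>..y} ?f \<le> integral {\<sigma>..y} (\<lambda>_. 1)" by (rule integral_le[OF int]) auto
  ultimately show "yval P t S \<sigma> \<le> yval P t S y" "yval P t S y \<le> yval P t S \<sigma> + (y - \<sigma>)"
    using assms(3) by auto
qed

lemma load_increment_bounds: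
  assumes run: "shadow_run V E c t P" and "0 \<le> \<sigma>" "\<sigma> \<le> y"
  shows "load V P t e \<sigma> \<le> load V P t e y"
    and "load V P t e y \<le> load V P t e \<sigma> + real (card {S. S \<subseteq> V \<and> cuts S e}) * (y - \<sigma>)"
proof -
  show "load V P t e \<sigma> \<le> load V P t e y"
    unfolding load_def by (rule sum_mono) (rule yval_increment_bounds[OF assms])
  have "load V P t e y \<le> (\<Sum>S | S \<subseteq> V \<and> cuts S e. yval P t S \<sigma> + (y - \<sigma>))"
    unfolding load_def by (rule sum_mono) (rule yval_increment_bounds[OF assms])
  also have "\<dots> = load V P t e \<sigma> + real (card {S. S \<subseteq> V \<and> cuts S e}) * (y - \<sigma>)"
    unfolding load_def by (simp add: sum.distrib)
  finally show "load V P t e y \<le> load V P t e \<sigma> + real (card {S. S \<subseteq> V \<and> cuts S e}) * (y - \<sigma>)" .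
qed

lemma load_tendsto_at_right:
  assumes run: "shadow_run V E c t P" and "0 \<le> \<sigma>"
  shows "((\<lambda>y. load V P t e y) \<longlongrightarrow> load V P t e \<sigma>) (at_right \<sigma>)"
proof (rule tendsto_sandwich)
  define K where "K = real (card {S. S \<subseteq> V \<and> cuts S e})"
  show "\<forall>\<^sub>F y in at_right \<sigma>. load V P t e \<sigma> \<le> load V P t e y"
    using eventually_at_right_less
    by eventually_elim (rule load_increment_bounds[OF run \<open>0 \<le> \<sigma>\<close>], simp)
  show "\<forall>\<^sub>F y in at_right \<sigma>. load V P t e y \<le> load V P t e \<sigma> + K * (y - \<sigma>)"
    using eventually_at_right_less
    by eventually_elim (unfold K_def, rule load_increment_bounds[OF run \<open>0 \<le> \<sigma>\<close>], simp)
  have "((\<lambda>y. load V P t e \<sigma> + K * (y - \<sigma>)) \<longlongrightarrow> load V P t e \<sigma> + K * (\<sigma> - \<sigma>)) (at_right \<sigma>)"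
    by (intro tendsto_intros)
  then show "((\<lambda>y. load V P t e \<sigma> + K * (y - \<sigma>)) \<longlongrightarrow> load V P t e \<sigma>) (at_right \<sigma>)" by simp
qed simp

lemma shadow_run_eventually_constant:
  assumes wf: "wf_graph V E c" and run: "shadow_run V E c t P" and "0 \<le> \<sigma>"
  shows "\<forall>\<^sub>F y in at_right \<sigma>. P y = P \<sigma>"
proof -
  have "finite E"
    using wf unfolding wf_graph_def by (auto intro: finite_subset[of E "Pow V"])
  then have "\<forall>\<^sub>F y in at_right \<sigma>. \<forall>e\<in>E. load V P t e \<sigma> < c e \<longrightarrow> load V P t e y < c e"
    by (intro eventually_ball_finite ballI impI)
      (auto intro: order_tendstoD(2)[OF load_tendsto_at_right[OF run \<open>0 \<le> \<sigma>\<close>]])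
  with eventually_at_right_less show ?thesis
  proof eventually_elim
    case (elim y)
    have "c e \<le> load V P t e y \<longleftrightarrow> c e \<le> load V P t e \<sigma>" if "e \<in> E" for e
      using elim(2) that load_increment_bounds(1)[OF run \<open>0 \<le> \<sigma>\<close>, of y e] elim(1)
      by (metis less_imp_le not_le order_trans)
    then have "{e \<in> E. c e \<le> load V P t e y} = {e \<in> E. c e \<le> load V P t e \<sigma>}" by blast
    then show "P y = P \<sigma>"
      using shadow_run_components[OF run] \<open>0 \<le> \<sigma>\<close> elim(1) by simp
  qed
qed

section \<open>Comparing two runs\<close>

lemma cuts_doubleton: "a \<noteq> b \<Longrightarrow> cuts X {a, b} \<longleftrightarrow> (a \<in> X \<longleftrightarrow> b \<notin> X)"
  unfolding cuts_def by (cases "a \<in> X"; cases "b \<in> X") auto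

definition active_cuts ::
  "'v set \<Rightarrow> (real \<Rightarrow> 'v set set) \<Rightarrow> ('v \<Rightarrow> real) \<Rightarrow> 'v set \<Rightarrow> real \<Rightarrow> 'v set set" where
  "active_cuts V P t e s = {S \<in> P s. S \<subseteq> V \<and> cuts S e \<and> active_at t s S}"

lemma finite_active_cuts: "finite V \<Longrightarrow> finite (active_cuts V P t e s)"
  unfolding active_cuts_def by (rule finite_subset[of _ "Pow V"]) auto

lemma load_has_integral_active_cuts:
  assumes run: "shadow_run V E c t P" and "finite V" "0 \<le> \<tau>"
  shows "((\<lambda>s. real (card (active_cuts V P t e s))) has_integral load V P t e \<tau>) {0..\<tau>}"
proof -
  let ?Q = "{S. S \<subseteq> V \<and> cuts S e}"
  have "finite ?Q" by (rule finite_subset[of _ "Pow V"]) (use \<open>finite V\<close> in auto)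
  have card_eq: "real (card (active_cuts V P t e s))
      = (\<Sum>S\<in>?Q. if S \<in> P s \<and> active_at t s S then 1 else 0)" for s
  proof -
    have "active_cuts V P t e s = {S \<in> ?Q. S \<in> P s \<and> active_at t s S}"
      unfolding active_cuts_def by auto
    then have "real (card (active_cuts V P t e s)) = (\<Sum>S\<in>{S \<in> ?Q. S \<in> P s \<and> active_at t s S}. 1)"
      by simp
    also have "\<dots> = (\<Sum>S\<in>?Q. if S \<in> P s \<and> active_at t s S then 1 else 0)"
      by (rule sum.inter_filter[OF \<open>finite ?Q\<close>])
    finally show ?thesis .
  qed
  have "((\<lambda>s. \<Sum>S\<in>?Q. if S \<in> P s \<and> active_at t s S then 1 else 0) has_integral load V P t e \<tau>) {0..\<tau>}"
    unfolding load_def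
  proof (rule has_integral_sum[OF \<open>finite ?Q\<close>])
    fix S
    show "((\<lambda>s. if S \<in> P s \<and> active_at t s S then 1 else 0) has_integral yval P t S \<tau>) {0..\<tau>}"
      unfolding yval_def by (rule integrable_integral, rule active_indicator_integrable[OF run order_refl])
  qed
  then show ?thesis unfolding card_eq .
qed

lemma card_active_cuts_le:
  assumes "finite V" "a \<noteq> b" "\<forall>v\<in>V. t v \<le> t' v"
    and disj: "pairwise disjnt (P s)"
    and refine: "\<forall>C\<in>P s. \<exists>D\<in>P' s. C \<subseteq> D"
    and sub: "\<forall>D\<in>P' s. D \<subseteq> V"
    and sep: "\<forall>D\<in>P' s. \<not> (a \<in> D \<and> b \<in> D)"
  shows "card (active_cuts V P t {a, b} s) \<le> card (active_cuts V P' t' {a, b} s)"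
proof -
  have "\<forall>C\<in>P s. \<exists>D. D \<in> P' s \<and> C \<subseteq> D" using refine by blast
  then obtain f where "\<forall>C\<in>P s. f C \<in> P' s \<and> C \<subseteq> f C" by (rule bchoice[elim_format]) blast
  then have f: "f C \<in> P' s \<and> C \<subseteq> f C" if "C \<in> P s" for C using that by blast
  note cuts = cuts_doubleton[OF \<open>a \<noteq> b\<close>]
  show ?thesis
  proof (rule card_inj_on_le[of f])
    show "f ` active_cuts V P t {a, b} s \<subseteq> active_cuts V P' t' {a, b} s"
    proof (rule image_subsetI)
      fix C assume C: "C \<in> active_cuts V P t {a, b} s"
      then have "C \<in> P s" and "C \<subseteq> V" and "cuts C {a, b}" and act: "active_at t s C"
        unfolding active_cuts_def by auto
      then have fC: "f C \<in> P' s" "C \<subseteq> f C" using f by auto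
      moreover have "cuts (f C) {a, b}"
        using \<open>cuts C {a, b}\<close> fC sep unfolding cuts by blast
      moreover have "active_at t' s (f C)"
        using active_at_mono[OF act fC(2) \<open>C \<subseteq> V\<close> assms(3)] .
      moreover have "f C \<subseteq> V" using sub fC(1) by blast
      ultimately show "f C \<in> active_cuts V P' t' {a, b} s"
        unfolding active_cuts_def by blast
    qed
    show "inj_on f (active_cuts V P t {a, b} s)"
    proof (rule inj_onI)
      fix C1 C2
      assume C1: "C1 \<in> active_cuts V P t {a, b} s" and C2: "C2 \<in> active_cuts V P t {a, b} s"
        and eq: "f C1 = f C2"
      have "C1 \<in> P s" "C2 \<in> P s" and cuts12: "cuts C1 {a, b}" "cuts C2 {a, b}"
        using C1 C2 unfolding active_cuts_def by auto
      have "\<not> (a \<in> f C1 \<and> b \<in> f C1)" using sep f[OF \<open>C1 \<in> P s\<close>] by blast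
      then have "\<not> disjnt C1 C2"
        using cuts12 f[OF \<open>C1 \<in> P s\<close>] f[OF \<open>C2 \<in> P s\<close>] eq unfolding cuts disjnt_def by blast
      then show "C1 = C2" using pairwiseD[OF disj \<open>C1 \<in> P s\<close> \<open>C2 \<in> P s\<close>] by blast
    qed
    show "finite (active_cuts V P' t' {a, b} s)" using \<open>finite V\<close> by (rule finite_active_cuts)
  qed
qed

lemma has_integral_le_off_negligible:
  fixes f g :: "'a::euclidean_space \<Rightarrow> real"
  assumes "(f has_integral i) S" "(g has_integral j) S" "negligible N"
    and "\<And>x. x \<in> S - N \<Longrightarrow> f x \<le> g x"
  shows "i \<le> j"
proof -
  have "((\<lambda>x. if x \<in> N then 0 else f x) has_integral i) S"
    by (rule has_integral_spike[OF assms(3) _ assms(1)]) simp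
  moreover have "((\<lambda>x. if x \<in> N then 0 else g x) has_integral j) S"
    by (rule has_integral_spike[OF assms(3) _ assms(2)]) simp
  ultimately show ?thesis by (rule has_integral_le) (use assms(4) in auto)
qed

lemma real_induction:
  fixes Q :: "real \<Rightarrow> bool"
  assumes step: "\<And>x. a \<le> x \<Longrightarrow> (\<And>s. a \<le> s \<Longrightarrow> s < x \<Longrightarrow> Q s) \<Longrightarrow> Q x"
    and right: "\<And>x. a \<le> x \<Longrightarrow> Q x \<Longrightarrow> eventually Q (at_right x)"
    and "a \<le> x"
  shows "Q x"
proof (rule ccontr)
  define B where "B = {y. a \<le> y \<and> \<not> Q y}"
  assume "\<not> Q x"
  then have "B \<noteq> {}" using \<open>a \<le> x\<close> unfolding B_def by blast
  have bdd: "bdd_below B" unfolding B_def by (rule bdd_belowI[of _ a]) simp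
  define \<sigma> where "\<sigma> = Inf B"
  have "a \<le> \<sigma>" unfolding \<sigma>_def by (rule cInf_greatest[OF \<open>B \<noteq> {}\<close>]) (simp add: B_def)
  have below: "Q s" if "a \<le> s" "s < \<sigma>" for s
    using that cInf_lower[OF _ bdd, of s] unfolding \<sigma>_def B_def by force
  then have "Q \<sigma>" by (rule step[OF \<open>a \<le> \<sigma>\<close>])
  then obtain b where "\<sigma> < b" and above: "\<And>y. \<sigma> < y \<Longrightarrow> y < b \<Longrightarrow> Q y"
    using right[OF \<open>a \<le> \<sigma>\<close>] unfolding eventually_at_right_field by blast
  have "b \<le> \<sigma>" unfolding \<sigma>_def
  proof (rule cInf_greatest[OF \<open>B \<noteq> {}\<close>])
    fix y assume "y \<in> B"
    then have "a \<le> y" "\<not> Q y" unfolding B_def by auto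
    show "b \<le> y"
    proof (rule ccontr)
      assume "\<not> b \<le> y"
      consider "y < \<sigma>" | "y = \<sigma>" | "\<sigma> < y" by linarith
      then show False
        by cases (use below above \<open>Q \<sigma>\<close> \<open>a \<le> y\<close> \<open>\<not> Q y\<close> \<open>\<not> b \<le> y\<close> in auto)
    qed
  qed
  then show False using \<open>\<sigma> < b\<close> by simp
qed

lemma shadow_run_refines_at:
  assumes wf: "wf_graph V E c" and tt: "\<forall>v\<in>V. t v \<le> t' v"
    and run: "shadow_run V E c t P" and run': "shadow_run V E c t' P'" and "0 \<le> \<tau>"
    and before: "\<And>s. 0 \<le> s \<Longrightarrow> s < \<tau> \<Longrightarrow> \<forall>C\<in>P s. \<exists>D\<in>P' s. C \<subseteq> D"
  shows "\<forall>C\<in>P \<tau>. \<exists>D\<in>P' \<tau>. C \<subseteq> D"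
proof -
  have "finite V" using wf unfolding wf_graph_def by blast
  define F where "F = {e \<in> E. c e \<le> load V P t e \<tau>}"
  define F' where "F' = {e \<in> E. c e \<le> load V P' t' e \<tau>}"
  have "(a, b) \<in> (edge_rel F')\<^sup>*" if "{a, b} \<in> F" for a b
  proof (rule ccontr)
    assume not_conn: "(a, b) \<notin> (edge_rel F')\<^sup>*"
    have e: "{a, b} \<in> E" "c {a, b} \<le> load V P t {a, b} \<tau>" using that unfolding F_def by auto
    then have "card {a, b} = 2" using wf unfolding wf_graph_def by blast
    then have "a \<noteq> b" by (cases "a = b") simp_all
    have "card (active_cuts V P t {a, b} s) \<le> card (active_cuts V P' t' {a, b} s)"
      if "s \<in> {0..\<tau>} - {\<tau>}" for s
    proof (rule card_active_cuts_le[OF \<open>finite V\<close> \<open>a \<noteq> b\<close> tt])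
      from that have s: "0 \<le> s" "s < \<tau>" by auto
      show "pairwise disjnt (P s)"
        unfolding shadow_run_components[OF run s(1)] by (rule pairwise_disjnt_components)
      show "\<forall>C\<in>P s. \<exists>D\<in>P' s. C \<subseteq> D" using before s .
      show "\<forall>D\<in>P' s. D \<subseteq> V" using shadow_run_subset[OF run' s(1)] by blast
      show "\<forall>D\<in>P' s. \<not> (a \<in> D \<and> b \<in> D)"
        using shadow_run_connected[OF run' s(1) less_imp_le[OF s(2)]] not_conn
        unfolding F'_def by blast
    qed
    then have "load V P t {a, b} \<tau> \<le> load V P' t' {a, b} \<tau>"
      by (intro has_integral_le_off_negligible[OF
            load_has_integral_active_cuts[OF run \<open>finite V\<close> \<open>0 \<le> \<tau>\<close>]
            load_has_integral_active_cuts[OF run' \<open>finite V\<close> \<open>0 \<le> \<tau>\<close>] negligible_sing]) simp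
    then have "{a, b} \<in> F'" using e unfolding F'_def by auto
    then show False using not_conn by auto
  qed
  then show ?thesis
    unfolding shadow_run_components[OF run \<open>0 \<le> \<tau>\<close>] shadow_run_components[OF run' \<open>0 \<le> \<tau>\<close>]
      F_def[symmetric] F'_def[symmetric]
    by (intro ballI components_refine)
qed

lemma shadow_run_refines_at_right:
  assumes wf: "wf_graph V E c" and run: "shadow_run V E c t P" and run': "shadow_run V E c t' P'"
    and "0 \<le> \<sigma>" and refines: "\<forall>C\<in>P \<sigma>. \<exists>D\<in>P' \<sigma>. C \<subseteq> D"
  shows "\<forall>\<^sub>F y in at_right \<sigma>. \<forall>C\<in>P y. \<exists>D\<in>P' y. C \<subseteq> D"
  using shadow_run_eventually_constant[OF wf run \<open>0 \<le> \<sigma>\<close>] eventually_at_right_less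
proof eventually_elim
  case (elim y)
  show ?case
  proof
    fix C assume "C \<in> P y"
    then obtain D where D: "D \<in> P' \<sigma>" "C \<subseteq> D" using elim(1) refines by auto
    obtain D' where "D' \<in> P' y" "D \<subseteq> D'"
      using shadow_run_coarsens[OF run' \<open>0 \<le> \<sigma>\<close> less_imp_le[OF elim(2)] D(1)] by blast
    then show "\<exists>D\<in>P' y. C \<subseteq> D" using D(2) by blast
  qed
qed

theorem mainTheorem4:
  fixes V :: "'v set" and E :: "'v set set" and c :: "'v set \<Rightarrow> real"
    and t t' :: "'v \<Rightarrow> real" and P P' :: "real \<Rightarrow> 'v set set" and \<tau> :: real
  assumes "wf_graph V E c"
    and "\<forall>v\<in>V. 0 \<le> t v" and "\<forall>v\<in>V. 0 \<le> t' v"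
    and "\<forall>v\<in>V. t v \<le> t' v"
    and "shadow_run V E c t P" and "shadow_run V E c t' P'"
    and "0 \<le> \<tau>"
  shows "(\<forall>C\<in>P \<tau>. active_at t \<tau> C \<longrightarrow> (\<exists>D\<in>P' \<tau>. active_at t' \<tau> D \<and> C \<subseteq> D))
       \<and> (\<forall>C\<in>P \<tau>. \<exists>D\<in>P' \<tau>. C \<subseteq> D)"
proof -
  note wf = assms(1) and tt = assms(4) and run = assms(5) and run' = assms(6)
  have refines: "\<forall>C\<in>P \<tau>. \<exists>D\<in>P' \<tau>. C \<subseteq> D"
  proof (rule real_induction[where a = 0 and Q = "\<lambda>s. \<forall>C\<in>P s. \<exists>D\<in>P' s. C \<subseteq> D",
        OF _ _ \<open>0 \<le> \<tau>\<close>])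
    show "\<forall>C\<in>P x. \<exists>D\<in>P' x. C \<subseteq> D"
      if "0 \<le> x" "\<And>s. 0 \<le> s \<Longrightarrow> s < x \<Longrightarrow> \<forall>C\<in>P s. \<exists>D\<in>P' s. C \<subseteq> D" for x
      using shadow_run_refines_at[OF wf tt run run' that] .
    show "\<forall>\<^sub>F y in at_right x. \<forall>C\<in>P y. \<exists>D\<in>P' y. C \<subseteq> D"
      if "0 \<le> x" "\<forall>C\<in>P x. \<exists>D\<in>P' x. C \<subseteq> D" for x
      using shadow_run_refines_at_right[OF wf run run' that] .
  qed
  have "\<forall>C\<in>P \<tau>. C \<subseteq> V" using shadow_run_subset[OF run \<open>0 \<le> \<tau>\<close>] by blast
  from active_refines[OF tt this refines] refines show ?thesis by (rule conjI)
qed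

end
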